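(* For every rigid sequence $(r_n)$ there exists a linear correlation, i.e. a sequence $a(n)=\int_Xf_0(T^{c_0n}x)\cdots f_k(T^{c_kn}x)\,d\mu(x)$ for some invertible measure preserving system $(X,\mu,T)$, $f_j\in L^\infty(\mu)$ and $c_j\in\mathbb{Z}$, whose null component is not null along $(r_n)$.
   Context: An increasing sequence of integers $(r_n)$ is rigid if there is a weakly mixing system $(X,\mu,T)$ with $\|f\circ T^{r_n}-f\|_{L^2(\mu)}\to0$ for all $f\in L^2(\mu)$. Nilsequences: uniform limits of sequences $n\mapsto f(\tau^nx)$ with $X=G/\Gamma$ a nilmanifold ($G$ nilpotent Lie group, $\Gamma$ discrete cocompact), $\tau\in G$, $x\in X$, $f\in C(X)$. A bounded sequence $b$ is null along $(r_n)$ if $\frac1N\sum_{n=1}^N|b(r_n)|\to0$, and null if this holds for $r_n=n$. Every linear correlation admits a unique decomposition as a nilsequence plus a null sequence; the latter is its null component. *)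

theory Defs
  imports "HOL-Analysis.Analysis" "HOL-Probability.Probability" "HOL-Algebra.Algebra"
begin

definition invertible_mps :: "'a measure \<Rightarrow> ('a \<Rightarrow> 'a) \<Rightarrow> bool" where
  "invertible_mps M T \<longleftrightarrow>
     prob_space M \<and> T \<in> M \<rightarrow>\<^sub>M M \<and> distr M M T = M \<and>
     bij_betw T (space M) (space M) \<and> inv_into (space M) T \<in> M \<rightarrow>\<^sub>M M"

definition tpow :: "'a set \<Rightarrow> ('a \<Rightarrow> 'a) \<Rightarrow> int \<Rightarrow> 'a \<Rightarrow> 'a" where
  "tpow S T k = (if 0 \<le> k then T ^^ nat k else (inv_into S T) ^^ nat (- k))"

definition L2fun :: "'a measure \<Rightarrow> ('a \<Rightarrow> complex) \<Rightarrow> bool" where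
  "L2fun M f \<longleftrightarrow> f \<in> borel_measurable M \<and> integrable M (\<lambda>x. (cmod (f x))^2)"

definition L2norm :: "'a measure \<Rightarrow> ('a \<Rightarrow> complex) \<Rightarrow> real" where
  "L2norm M f = sqrt (LINT x|M. (cmod (f x))^2)"

definition Linfty_fun :: "'a measure \<Rightarrow> ('a \<Rightarrow> complex) \<Rightarrow> bool" where
  "Linfty_fun M f \<longleftrightarrow> f \<in> borel_measurable M \<and> (\<exists>B. AE x in M. cmod (f x) \<le> B)"

definition weakly_mixing :: "'a measure \<Rightarrow> ('a \<Rightarrow> 'a) \<Rightarrow> bool" where
  "weakly_mixing M T \<longleftrightarrow>
     (\<forall>f g. L2fun M f \<longrightarrow> L2fun M g \<longrightarrow>
        (\<lambda>N. (\<Sum>n<N. cmod ((LINT x|M. f ((T ^^ n) x) * cnj (g x))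
                              - (LINT x|M. f x) * cnj (LINT x|M. g x))) / real N)
        \<longlonglongrightarrow> 0)"

definition nontrivial_space :: "'a measure \<Rightarrow> bool" where
  "nontrivial_space M \<longleftrightarrow> (\<exists>A\<in>sets M. 0 < measure M A \<and> measure M A < 1)"

definition rigid_along :: "'a measure \<Rightarrow> ('a \<Rightarrow> 'a) \<Rightarrow> (nat \<Rightarrow> nat) \<Rightarrow> bool" where
  "rigid_along M T r \<longleftrightarrow>
     (\<forall>f. L2fun M f \<longrightarrow> (\<lambda>n. L2norm M (\<lambda>x. f ((T ^^ r n) x) - f x)) \<longlonglongrightarrow> 0)"

definition linear_correlation :: "'a measure \<Rightarrow> ('a \<Rightarrow> 'a) \<Rightarrow> (nat \<Rightarrow> complex) \<Rightarrow> bool" where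
  "linear_correlation M T a \<longleftrightarrow>
     (\<exists>(k::nat) (f::nat \<Rightarrow> 'a \<Rightarrow> complex) (c::nat \<Rightarrow> int).
        (\<forall>j\<le>k. Linfty_fun M (f j)) \<and>
        (\<forall>n. a n = (LINT x|M. (\<Prod>j\<le>k. f j (tpow (space M) T (c j * int n) x)))))"

definition null_seq :: "(nat \<Rightarrow> complex) \<Rightarrow> bool" where
  "null_seq b \<longleftrightarrow> (\<lambda>N. (\<Sum>n=1..N. cmod (b n)) / real N) \<longlonglongrightarrow> 0"

definition null_along :: "(nat \<Rightarrow> nat) \<Rightarrow> (nat \<Rightarrow> complex) \<Rightarrow> bool" where
  "null_along r b \<longleftrightarrow> (\<lambda>N. (\<Sum>n=1..N. cmod (b (r n))) / real N) \<longlonglongrightarrow> 0"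

primrec lower_central :: "('g, 'b) monoid_scheme \<Rightarrow> nat \<Rightarrow> 'g set" where
  "lower_central G 0 = carrier G"
| "lower_central G (Suc i) =
     generate G {mult G (mult G (mult G x y) (m_inv G x)) (m_inv G y) | x y.
                   x \<in> carrier G \<and> y \<in> lower_central G i}"

definition nilpotent_group :: "('g, 'b) monoid_scheme \<Rightarrow> bool" where
  "nilpotent_group G \<longleftrightarrow> group G \<and> (\<exists>s. lower_central G s = {one G})"

definition topological_group :: "('g, 'b) monoid_scheme \<Rightarrow> 'g topology \<Rightarrow> bool" where
  "topological_group G \<tau> \<longleftrightarrow>
     group G \<and> topspace \<tau> = carrier G \<and> Hausdorff_space \<tau> \<and>
     continuous_map (prod_topology \<tau> \<tau>) \<tau> (\<lambda>(x, y). mult G x y) \<and>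
     continuous_map \<tau> \<tau> (m_inv G)"

definition locally_euclidean :: "'g topology \<Rightarrow> bool" where
  "locally_euclidean \<tau> \<longleftrightarrow>
     (\<exists>d. \<forall>x\<in>topspace \<tau>. \<exists>U. openin \<tau> U \<and> x \<in> U \<and>
        (\<exists>V. openin (Euclidean_space d) V \<and>
             subtopology \<tau> U homeomorphic_space subtopology (Euclidean_space d) V))"

text \<open>Lie groups, as locally Euclidean Hausdorff topological groups (these carry a
  unique compatible real-analytic Lie group structure, Gleason--Montgomery--Zippin).\<close>
definition lie_group :: "('g, 'b) monoid_scheme \<Rightarrow> 'g topology \<Rightarrow> bool" where
  "lie_group G \<tau> \<longleftrightarrow> topological_group G \<tau> \<and> locally_euclidean \<tau>"

text \<open>The group elements are represented inside the type real,
  which is no loss of generality since Lie groups have cardinality at most continuum.\<close>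
definition basic_nilsequence :: "(nat \<Rightarrow> complex) \<Rightarrow> bool" where
  "basic_nilsequence \<phi> \<longleftrightarrow>
     (\<exists>(G::real monoid) (\<sigma>::real topology) (\<Gamma>::real set) (Xt::real set topology)
        (F::real set \<Rightarrow> complex) (g::real) (x0::real set).
        nilpotent_group G \<and> lie_group G \<sigma> \<and> subgroup \<Gamma> G \<and>
        subtopology \<sigma> \<Gamma> = discrete_topology \<Gamma> \<and>
        quotient_map \<sigma> Xt (\<lambda>h. l_coset G h \<Gamma>) \<and> compact_space Xt \<and>
        g \<in> carrier G \<and> x0 \<in> topspace Xt \<and> continuous_map Xt euclidean F \<and>
        (\<forall>n. \<phi> n = F (l_coset G (pow G g n) x0)))"

definition nilsequence :: "(nat \<Rightarrow> complex) \<Rightarrow> bool" where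
  "nilsequence \<psi> \<longleftrightarrow>
     (\<forall>\<epsilon>>0. \<exists>\<phi>. basic_nilsequence \<phi> \<and> (\<forall>n. cmod (\<psi> n - \<phi> n) < \<epsilon>))"

end

theory Submission
  imports Defs
begin

(* Pick a set A with 0 < mu A < 1 and put g = 1_A - mu A.  The autocorrelation
   a n = int g(T^n x) g(x) dmu is a linear correlation of the system itself.  Weak mixing
   makes it null, so its decomposition is 0 + a.  Rigidity along r gives g o T^(r n) -> g
   in L^2, hence a (r n) -> int g^2 = mu A (1 - mu A) > 0, so a is not null along r. *)

lemma basic_nilsequence_const: "basic_nilsequence (\<lambda>_. c)"
proof -
  define G :: "real monoid" where "G = \<lparr>carrier = {0}, mult = (\<lambda>_ _. 0), one = 0\<rparr>"
  define \<sigma> :: "real topology" where "\<sigma> = discrete_topology {0}"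
  define Xt :: "real set topology" where "Xt = discrete_topology {{0}}"
  have group: "group G"
    by (rule groupI) (auto simp: G_def)
  have inv: "m_inv G 0 = 0"
    using group.inv_closed[OF group, of 0] by (simp add: G_def)
  have "nilpotent_group G"
    unfolding nilpotent_group_def using group by (auto intro!: exI[of _ 0] simp: G_def)
  moreover have "topological_group G \<sigma>"
  proof -
    have "(\<lambda>(x, y). mult G x y) = (\<lambda>_. 0)"
      by (auto simp: G_def)
    then show ?thesis
      unfolding topological_group_def using group inv by (auto simp: \<sigma>_def G_def)
  qed
  moreover have "locally_euclidean \<sigma>"
  proof -
    have "topspace (Euclidean_space 0) = {\<lambda>_. 0}"
      by (auto simp: topspace_Euclidean_space)
    then have "subtopology (Euclidean_space 0) (topspace (Euclidean_space 0)) = discrete_topology {\<lambda>_. 0}"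
      by (simp add: subtopology_eq_discrete_topology_sing)
    moreover have "discrete_topology {0::real} homeomorphic_space discrete_topology {\<lambda>_::nat. 0::real}"
      unfolding homeomorphic_space_def homeomorphic_maps_def
      by (intro exI[of _ "\<lambda>_. \<lambda>_. 0"] exI[of _ "\<lambda>_. 0"]) simp
    ultimately show ?thesis
      unfolding locally_euclidean_def \<sigma>_def
      by (intro exI[of _ 0] ballI exI[of _ "{0}"] conjI exI[of _ "topspace (Euclidean_space 0)"]) auto
  qed
  moreover have "quotient_map \<sigma> Xt (\<lambda>h. l_coset G h {0})"
  proof -
    have "l_coset G h {0} = {0}" for h
      by (auto simp: l_coset_def G_def)
    then show ?thesis
      unfolding quotient_map_def \<sigma>_def Xt_def by auto
  qed
  ultimately show ?thesis
    unfolding basic_nilsequence_def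
    by (intro exI[of _ G] exI[of _ \<sigma>] exI[of _ "{0}"] exI[of _ Xt] exI[of _ "\<lambda>_. c"]
              exI[of _ 0] exI[of _ "{0}"])
       (use inv in \<open>auto simp: compact_space_discrete_topology lie_group_def subgroup_def
                                G_def \<sigma>_def Xt_def\<close>)
qed

lemma nilsequence_const: "nilsequence (\<lambda>_. c)"
  unfolding nilsequence_def using basic_nilsequence_const by (auto intro!: exI[of _ "\<lambda>_. c"])

lemma null_along_iff_null_seq_comp: "null_along r b \<longleftrightarrow> null_seq (\<lambda>n. b (r n))"
  by (simp add: null_along_def null_seq_def)

(* null_seq averages over {1..N}, whereas weak mixing controls the averages over {..<N}. *)
lemma null_seq_if_bounded_cesaro_lessThan:
  assumes bound: "\<And>n. cmod (b n) \<le> B"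
    and lim: "(\<lambda>N. (\<Sum>n<N. cmod (b n)) / real N) \<longlonglongrightarrow> 0"
  shows "null_seq b"
proof -
  have upper: "(\<Sum>n=1..N. cmod (b n)) / real N \<le> (\<Sum>n<N. cmod (b n)) / real N + B / real N" for N
  proof -
    have "(\<Sum>n=1..N. cmod (b n)) \<le> (\<Sum>n<Suc N. cmod (b n))"
      by (rule sum_mono2) auto
    also have "\<dots> \<le> (\<Sum>n<N. cmod (b n)) + B"
      using bound[of N] by simp
    finally show ?thesis
      by (simp add: divide_right_mono flip: add_divide_distrib)
  qed
  have lower: "0 \<le> (\<Sum>n=1..N. cmod (b n)) / real N" for N
    by (simp add: sum_nonneg)
  have "(\<lambda>N. (\<Sum>n<N. cmod (b n)) / real N + B / real N) \<longlonglongrightarrow> 0 + 0"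
    by (intro tendsto_add lim lim_const_over_n)
  then have majorant: "(\<lambda>N. (\<Sum>n<N. cmod (b n)) / real N + B / real N) \<longlonglongrightarrow> 0"
    by simp
  show ?thesis
    unfolding null_seq_def
    by (rule tendsto_sandwich[OF _ _ tendsto_const majorant]) (intro always_eventually allI lower upper)+
qed

lemma not_null_seq_if_eventually_ge:
  assumes "0 < \<epsilon>" and "eventually (\<lambda>n. \<epsilon> \<le> cmod (b n)) sequentially"
  shows "\<not> null_seq b"
proof
  from assms(2) obtain N0 where N0: "\<And>n. N0 \<le> n \<Longrightarrow> \<epsilon> \<le> cmod (b n)"
    by (auto simp: eventually_sequentially)
  have "eventually (\<lambda>N. \<epsilon> / 2 \<le> (\<Sum>n=1..N. cmod (b n)) / real N) sequentially"
  proof (rule eventually_sequentiallyI)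
    fix N assume N: "2 * N0 + 1 \<le> N"
    have "real (N - N0) * \<epsilon> = (\<Sum>n=N0+1..N. \<epsilon>)"
      by simp
    also have "\<dots> \<le> (\<Sum>n=N0+1..N. cmod (b n))"
      by (rule sum_mono) (auto intro: N0)
    also have "\<dots> \<le> (\<Sum>n=1..N. cmod (b n))"
      by (rule sum_mono2) auto
    finally have "real (N - N0) * \<epsilon> \<le> (\<Sum>n=1..N. cmod (b n))" .
    moreover have "real N / 2 * \<epsilon> \<le> real (N - N0) * \<epsilon>"
      using N assms(1) by (intro mult_right_mono) (simp_all add: of_nat_diff)
    ultimately show "\<epsilon> / 2 \<le> (\<Sum>n=1..N. cmod (b n)) / real N"
      using N by (simp add: field_simps)
  qed
  moreover assume "null_seq b"
  then have "eventually (\<lambda>N. (\<Sum>n=1..N. cmod (b n)) / real N < \<epsilon> / 2) sequentially"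
    unfolding null_seq_def using assms(1) by (intro order_tendstoD(2)) auto
  ultimately have "eventually (\<lambda>_. False) sequentially"
    by eventually_elim simp
  then show False
    by simp
qed

lemma not_null_seq_if_norm_tendsto:
  assumes "(\<lambda>n. cmod (b n)) \<longlonglongrightarrow> c" and "0 < c"
  shows "\<not> null_seq b"
proof (rule not_null_seq_if_eventually_ge)
  show "0 < c / 2"
    using assms(2) by simp
  show "eventually (\<lambda>n. c / 2 \<le> cmod (b n)) sequentially"
    using order_tendstoD(1)[OF assms(1), of "c / 2"] assms(2) by (auto elim: eventually_mono)
qed

lemma linear_correlation_pair:
  assumes "Linfty_fun M f0" and "Linfty_fun M f1"
  shows "linear_correlation M T (\<lambda>n. LINT x|M. f0 x * f1 ((T ^^ n) x))"
  unfolding linear_correlation_def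
  by (intro exI[of _ 1] exI[of _ "\<lambda>j. if j = 0 then f0 else f1"] exI[of _ int] conjI allI impI)
     (auto simp: assms atMost_Suc tpow_def ac_simps)

lemma (in prob_space) integrable_indicator_event:
  "A \<in> events \<Longrightarrow> integrable M (indicator A :: 'a \<Rightarrow> real)"
  using emeasure_finite[of A] by (intro integrable_real_indicator) (auto simp: less_top[symmetric])

lemma (in prob_space) variance_indicator:
  assumes "A \<in> events"
  shows "variance (indicator A) = prob A * (1 - prob A)"
proof -
  have "(\<lambda>x. (indicator A x)\<^sup>2) = (indicator A :: 'a \<Rightarrow> real)"
    by (auto simp: indicator_def)
  moreover have "integrable M (indicator A :: 'a \<Rightarrow> real)"
    using assms by (rule integrable_indicator_event)
  ultimately show ?thesis
    using assms by (simp add: variance_eq Int_absorb2 prob_space power2_eq_square algebra_simps)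
qed

lemma (in prob_space) integral_centered_indicator:
  assumes "A \<in> events"
  shows "(LINT x|M. indicator A x - prob A) = 0"
    and "(LINT x|M. (indicator A x - prob A)\<^sup>2) = prob A * (1 - prob A)"
proof -
  have "integrable M (indicator A :: 'a \<Rightarrow> real)"
    using assms by (rule integrable_indicator_event)
  then show "(LINT x|M. indicator A x - prob A) = 0"
    using assms by (simp add: prob_space Int_absorb2)
  show "(LINT x|M. (indicator A x - prob A)\<^sup>2) = prob A * (1 - prob A)"
    using assms variance_indicator[OF assms] by (simp add: Int_absorb2)
qed

lemma abs_mult_le_square_bound:
  fixes u v B :: real
  assumes "\<bar>u\<bar> \<le> B" and "\<bar>v\<bar> \<le> B"
  shows "\<bar>u * v\<bar> \<le> B * B"
  unfolding abs_mult using assms by (intro mult_mono) auto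

definition autocorrelation :: "'a measure \<Rightarrow> ('a \<Rightarrow> 'a) \<Rightarrow> ('a \<Rightarrow> real) \<Rightarrow> nat \<Rightarrow> real" where
  "autocorrelation M T g n = (LINT x|M. g ((T ^^ n) x) * g x)"

locale measure_preserving_system = prob_space M for M :: "'a measure" +
  fixes T :: "'a \<Rightarrow> 'a"
  assumes measurable_T: "T \<in> M \<rightarrow>\<^sub>M M"
    and distr_T: "distr M M T = M"
begin

lemma measurable_funpow: "T ^^ n \<in> M \<rightarrow>\<^sub>M M"
  by (induction n) (auto intro: measurable_compose[OF _ measurable_T] measurable_ident_sets)

lemma distr_funpow: "distr M M (T ^^ n) = M"
proof (induction n)
  case 0
  show ?case by (simp add: id_def)
next
  case (Suc n)
  have "distr M M (T ^^ Suc n) = distr (distr M M (T ^^ n)) M T"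
    using distr_distr[OF measurable_T measurable_funpow] by simp
  also have "\<dots> = M"
    using Suc distr_T by simp
  finally show ?case .
qed

lemma integral_funpow_comp:
  fixes h :: "'a \<Rightarrow> 'b::{banach, second_countable_topology}"
  assumes "h \<in> borel_measurable M"
  shows "(LINT x|M. h ((T ^^ n) x)) = integral\<^sup>L M h"
  using integral_distr[OF measurable_funpow assms] distr_funpow by simp

context
  fixes g :: "'a \<Rightarrow> real" and B :: real
  assumes g_measurable [measurable]: "g \<in> borel_measurable M"
    and g_bounded: "\<And>x. \<bar>g x\<bar> \<le> B"
begin

lemma measurable_funpow_comp [measurable]: "(\<lambda>x. g ((T ^^ n) x)) \<in> borel_measurable M"
  using measurable_compose[OF measurable_funpow g_measurable] .

lemma integrable_bounded_product:
  assumes "u \<in> borel_measurable M" "v \<in> borel_measurable M"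
    and "\<And>x. \<bar>u x\<bar> \<le> B" "\<And>x. \<bar>v x\<bar> \<le> B"
  shows "integrable M (\<lambda>x. u x * v x)"
proof (rule integrable_const_bound[where B = "B * B"])
  show "AE x in M. norm (u x * v x) \<le> B * B"
    using assms(3,4) by (simp add: abs_mult_le_square_bound)
qed (use assms(1,2) in simp)

lemma L2fun_of_real: "L2fun M (\<lambda>x. complex_of_real (g x))"
  using integrable_bounded_product[OF g_measurable g_measurable g_bounded g_bounded]
  by (simp add: L2fun_def power2_eq_square)

lemma Linfty_fun_of_real: "Linfty_fun M (\<lambda>x. complex_of_real (g x))"
  unfolding Linfty_fun_def using g_bounded by (auto intro!: exI[of _ B])

lemma linear_correlation_autocorrelation:
  "linear_correlation M T (\<lambda>n. complex_of_real (autocorrelation M T g n))"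
proof -
  have "(\<lambda>n. complex_of_real (autocorrelation M T g n))
        = (\<lambda>n. LINT x|M. complex_of_real (g x) * complex_of_real (g ((T ^^ n) x)))"
    by (simp add: fun_eq_iff autocorrelation_def mult.commute flip: of_real_mult)
  then show ?thesis
    using linear_correlation_pair[OF Linfty_fun_of_real Linfty_fun_of_real] by simp
qed

lemma abs_autocorrelation_le: "\<bar>autocorrelation M T g n\<bar> \<le> B * B"
proof -
  have "integrable M (\<lambda>x. g ((T ^^ n) x) * g x)"
    by (intro integrable_bounded_product measurable_funpow_comp g_measurable g_bounded)
  moreover have "\<bar>g ((T ^^ n) x) * g x\<bar> \<le> B * B" for x
    by (intro abs_mult_le_square_bound g_bounded)
  ultimately have "(LINT x|M. \<bar>g ((T ^^ n) x) * g x\<bar>) \<le> B * B"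
    by (intro integral_le_const) auto
  then show ?thesis
    unfolding autocorrelation_def by (rule order_trans[OF integral_abs_bound])
qed

lemma integral_sq_diff_funpow:
  "(LINT x|M. (g ((T ^^ n) x) - g x)\<^sup>2) = 2 * (LINT x|M. (g x)\<^sup>2) - 2 * autocorrelation M T g n"
proof -
  have integrable:
    "integrable M (\<lambda>x. g ((T ^^ n) x) * g ((T ^^ n) x))"
    "integrable M (\<lambda>x. g x * g x)"
    "integrable M (\<lambda>x. g ((T ^^ n) x) * g x)"
    by (intro integrable_bounded_product measurable_funpow_comp g_measurable g_bounded)+
  have "(LINT x|M. (g ((T ^^ n) x) - g x)\<^sup>2)
      = (LINT x|M. g ((T ^^ n) x) * g ((T ^^ n) x) + g x * g x - 2 * (g ((T ^^ n) x) * g x))"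
    by (rule Bochner_Integration.integral_cong) (simp_all add: power2_eq_square algebra_simps)
  also have "\<dots> = (LINT x|M. g ((T ^^ n) x) * g ((T ^^ n) x)) + (LINT x|M. g x * g x)
                   - 2 * autocorrelation M T g n"
    using integrable by (simp add: autocorrelation_def)
  also have "(LINT x|M. g ((T ^^ n) x) * g ((T ^^ n) x)) = (LINT x|M. g x * g x)"
    by (rule integral_funpow_comp) simp
  finally show ?thesis
    by (simp add: power2_eq_square)
qed

lemma autocorrelation_tendsto_along_rigid:
  assumes "rigid_along M T r"
  shows "(\<lambda>n. autocorrelation M T g (r n)) \<longlonglongrightarrow> (LINT x|M. (g x)\<^sup>2)"
proof -
  define D where "D m = (LINT x|M. (g ((T ^^ m) x) - g x)\<^sup>2)" for m
  have "(\<lambda>n. L2norm M (\<lambda>x. of_real (g ((T ^^ r n) x)) - of_real (g x))) \<longlonglongrightarrow> 0"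
    using assms L2fun_of_real unfolding rigid_along_def by blast
  moreover have "L2norm M (\<lambda>x. of_real (g ((T ^^ m) x)) - of_real (g x)) = sqrt (D m)" for m
    unfolding L2norm_def D_def by (simp flip: of_real_diff)
  ultimately have "(\<lambda>n. (sqrt (D (r n)))\<^sup>2) \<longlonglongrightarrow> 0\<^sup>2"
    by (intro tendsto_power) simp
  moreover have "D m \<ge> 0" for m
    unfolding D_def by simp
  ultimately have "(\<lambda>n. (LINT x|M. (g x)\<^sup>2) - D (r n) / 2) \<longlonglongrightarrow> (LINT x|M. (g x)\<^sup>2) - 0 / 2"
    by (intro tendsto_intros) simp_all
  moreover have "autocorrelation M T g m = (LINT x|M. (g x)\<^sup>2) - D m / 2" for m
    unfolding D_def integral_sq_diff_funpow by (simp add: field_simps)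
  ultimately show ?thesis
    by simp
qed

lemma autocorrelation_cesaro_tendsto_zero:
  assumes "weakly_mixing M T" and "integral\<^sup>L M g = 0"
  shows "(\<lambda>N. (\<Sum>n<N. \<bar>autocorrelation M T g n\<bar>) / real N) \<longlonglongrightarrow> 0"
proof -
  have "(\<lambda>N. (\<Sum>n<N. cmod ((LINT x|M. of_real (g ((T ^^ n) x)) * cnj (of_real (g x)))
             - (LINT x|M. of_real (g x)) * cnj (LINT x|M. of_real (g x)))) / real N) \<longlonglongrightarrow> 0"
    using assms(1) L2fun_of_real unfolding weakly_mixing_def by blast
  moreover have "(LINT x|M. of_real (g ((T ^^ n) x)) * cnj (of_real (g x)))
                 = complex_of_real (autocorrelation M T g n)" for n
    by (simp add: autocorrelation_def flip: integral_complex_of_real)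
  moreover have "(LINT x|M. complex_of_real (g x)) = 0"
    using assms(2) by simp
  ultimately show ?thesis
    by (simp only: mult_zero_left diff_zero norm_of_real)
qed

lemma null_seq_autocorrelation:
  assumes "weakly_mixing M T" and "integral\<^sup>L M g = 0"
  shows "null_seq (\<lambda>n. complex_of_real (autocorrelation M T g n))"
  using abs_autocorrelation_le autocorrelation_cesaro_tendsto_zero[OF assms]
  by (intro null_seq_if_bounded_cesaro_lessThan[where B = "B * B"]) simp_all

lemma not_null_along_autocorrelation:
  assumes "rigid_along M T r" and "0 < (LINT x|M. (g x)\<^sup>2)"
  shows "\<not> null_along r (\<lambda>n. complex_of_real (autocorrelation M T g n))"
  unfolding null_along_iff_null_seq_comp
proof (rule not_null_seq_if_norm_tendsto)
  show "(\<lambda>n. cmod (complex_of_real (autocorrelation M T g (r n)))) \<longlonglongrightarrow> (LINT x|M. (g x)\<^sup>2)"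
    using tendsto_rabs[OF autocorrelation_tendsto_along_rigid[OF assms(1)]] assms(2) by simp
qed (fact assms(2))

end

end

lemma measure_preserving_system_if_invertible_mps:
  "invertible_mps M T \<Longrightarrow> measure_preserving_system M T"
  by (simp add: invertible_mps_def measure_preserving_system_def measure_preserving_system_axioms_def)

theorem proposition1p6:
  fixes M :: "'a measure" and T :: "'a \<Rightarrow> 'a" and r :: "nat \<Rightarrow> nat"
  assumes "strict_mono r"
    and "invertible_mps M T" and "nontrivial_space M" and "weakly_mixing M T"
    and "rigid_along M T r"
  shows "\<exists>(M'::'a measure) T' a. invertible_mps M' T' \<and> linear_correlation M' T' a \<and>
           (\<exists>\<psi> b. nilsequence \<psi> \<and> null_seq b \<and> (\<forall>n. a n = \<psi> n + b n) \<and>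
                  \<not> null_along r b)"
proof -
  interpret measure_preserving_system M T
    using assms(2) by (rule measure_preserving_system_if_invertible_mps)
  from assms(3) obtain A where A: "A \<in> events" "0 < prob A" "prob A < 1"
    unfolding nontrivial_space_def by auto
  define g where "g = (\<lambda>x. indicator A x - prob A)"
  have g_measurable: "g \<in> borel_measurable M" and g_bounded: "\<bar>g x\<bar> \<le> 1" for x
    using A unfolding g_def by (auto simp: indicator_def)
  have g_mean: "integral\<^sup>L M g = 0" and g_variance: "0 < (LINT x|M. (g x)\<^sup>2)"
    using integral_centered_indicator[OF A(1)] A(2,3) by (simp_all add: g_def)
  define a where "a n = complex_of_real (autocorrelation M T g n)" for n
  have "linear_correlation M T a" and "null_seq a" and "\<not> null_along r a"
    using linear_correlation_autocorrelation[OF g_measurable g_bounded]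
      null_seq_autocorrelation[OF g_measurable g_bounded assms(4) g_mean]
      not_null_along_autocorrelation[OF g_measurable g_bounded assms(5) g_variance]
    by (simp_all add: a_def[abs_def])
  then show ?thesis
    using assms(2) nilsequence_const[of 0]
    by (intro exI[of _ M] exI[of _ T] exI[of _ a] conjI exI[of _ "\<lambda>_. 0"] exI[of _ a]) simp_all
qed

end
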